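(* Let $G$ and $H$ be finite sequences of non-negative integers, each having at least one nonzero entry, with $\langle G\rangle=\langle H\rangle$. Then some permutation of $G$ is telescopic if and only if some permutation of $H$ is telescopic.
   Context: For a finite sequence $G=(g_1,\dots,g_k)\in\mathbb{N}_0^k$, $\langle G\rangle$ is the set of $\mathbb{N}_0$-linear combinations of its entries. With $G_i=(g_1,\dots,g_i)$ and $d_i=\gcd(G_i)$, for $G$ with $g_1>0$ if $k=1$ and $g_1+g_2>0$ if $k\ge2$, set $c_j=d_{j-1}/d_j$ ($2\le j\le k$); $G$ is telescopic if $c_jg_j\in\langle G_{j-1}\rangle$ for all $2\le j\le k$. A permutation of $G$ is $(g_{\sigma(1)},\dots,g_{\sigma(k)})$ for $\sigma$ in the symmetric group on $k$ letters. *)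

theory Defs
  imports "HOL-Combinatorics.Permutations"
begin

text \<open>A finite sequence G = (g_1,...,g_k) of non-negative integers is a list of naturals;
  g_j is G ! (j-1) and the prefix G_i is take i G.\<close>

definition lincomb_set :: "nat list \<Rightarrow> nat set" where
  "lincomb_set G = {(\<Sum>i<length G. a i * G ! i) | a :: nat \<Rightarrow> nat. True}"

definition dpref :: "nat list \<Rightarrow> nat \<Rightarrow> nat" where
  "dpref G i = Gcd (set (take i G))"

text \<open>Telescopic sequences, including the standing non-degeneracy requirement
  (g_1 > 0 if k = 1, g_1 + g_2 > 0 if k >= 2).\<close>
definition telescopic :: "nat list \<Rightarrow> bool" where
  "telescopic G \<longleftrightarrow>
     G \<noteq> [] \<and>
     (length G = 1 \<longrightarrow> G ! 0 > 0) \<and>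
     (length G \<ge> 2 \<longrightarrow> G ! 0 + G ! 1 > 0) \<and>
     (\<forall>j. 2 \<le> j \<and> j \<le> length G \<longrightarrow>
        (dpref G (j - 1) div dpref G j) * G ! (j - 1) \<in> lincomb_set (take (j - 1) G))"

definition permute_seq :: "(nat \<Rightarrow> nat) \<Rightarrow> nat list \<Rightarrow> nat list" where
  "permute_seq \<sigma> G = map (\<lambda>i. G ! \<sigma> i) [0..<length G]"

end

theory Submission
  imports Defs "HOL-Computational_Algebra.Euclidean_Algorithm"
begin

(* The monoid <G> = <H> has a unique minimal generating set, its atoms (irreducible elements),
   and these occur among the entries of every generating sequence. Since c_j g_j = lcm(d_{j-1}, g_j),
   the telescopic condition reads lcm(d_{j-1}, g_j) \<in> <G_{j-1}>. Walking along a telescopic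
   arrangement of G, the atoms of the prefix monoids can be kept listed in a telescopic order: a
   new entry g is either already generated, and nothing changes, or it becomes an atom and destroys
   only the atom lcm(d, g), whose place in the list g then takes. Appending the remaining entries
   of H to the final list keeps it telescopic, because each of them is already generated by the
   atoms and leaves the gcd unchanged. *)

inductive_set gen_monoid :: "nat set \<Rightarrow> nat set" for X where
  zero: "0 \<in> gen_monoid X"
| add_gen: "a \<in> X \<Longrightarrow> x \<in> gen_monoid X \<Longrightarrow> a + x \<in> gen_monoid X"

lemma gen_monoid_add: "x \<in> gen_monoid X \<Longrightarrow> y \<in> gen_monoid X \<Longrightarrow> x + y \<in> gen_monoid X"
  by (induction x rule: gen_monoid.induct) (auto simp: add.assoc intro: gen_monoid.intros)

lemma gen_monoid_base: "a \<in> X \<Longrightarrow> a \<in> gen_monoid X"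
  using add_gen[OF _ zero] by simp

lemma gen_monoid_mult: "x \<in> gen_monoid X \<Longrightarrow> m * x \<in> gen_monoid X"
  by (induction m) (auto intro: gen_monoid.zero gen_monoid_add)

lemma gen_monoid_least: "Y \<subseteq> gen_monoid Z \<Longrightarrow> gen_monoid Y \<subseteq> gen_monoid Z"
proof
  fix x assume Y: "Y \<subseteq> gen_monoid Z" and "x \<in> gen_monoid Y"
  from this(2) show "x \<in> gen_monoid Z"
    by (induction x rule: gen_monoid.induct) (use Y in \<open>auto intro: gen_monoid.zero gen_monoid_add\<close>)
qed

lemma gen_monoid_mono: "Y \<subseteq> Z \<Longrightarrow> gen_monoid Y \<subseteq> gen_monoid Z"
  by (rule gen_monoid_least) (auto intro: gen_monoid_base)

lemma gen_monoid_insert: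
  "x \<in> gen_monoid (insert g X) \<longleftrightarrow> (\<exists>y m. y \<in> gen_monoid X \<and> x = y + m * g)"
proof
  assume "x \<in> gen_monoid (insert g X)"
  then show "\<exists>y m. y \<in> gen_monoid X \<and> x = y + m * g"
  proof (induction x rule: gen_monoid.induct)
    case zero
    then show ?case using gen_monoid.zero by force
  next
    case (add_gen a x)
    then obtain y m where "y \<in> gen_monoid X" "x = y + m * g"
      by blast
    with add_gen.hyps(1) show ?case
      by (metis add.assoc add.commute gen_monoid.add_gen insert_iff mult_Suc)
  qed
next
  assume "\<exists>y m. y \<in> gen_monoid X \<and> x = y + m * g"
  then obtain y m where "y \<in> gen_monoid X" "x = y + m * g"
    by blast
  moreover have "y \<in> gen_monoid (insert g X)"
    using \<open>y \<in> gen_monoid X\<close> gen_monoid_mono[of X "insert g X"] by auto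
  moreover have "m * g \<in> gen_monoid (insert g X)"
    by (intro gen_monoid_mult gen_monoid_base) simp
  ultimately show "x \<in> gen_monoid (insert g X)"
    by (simp add: gen_monoid_add)
qed

lemma gen_monoid_insert_cong:
  "gen_monoid Y = gen_monoid Z \<Longrightarrow> gen_monoid (insert g Y) = gen_monoid (insert g Z)"
  by (auto simp: gen_monoid_insert)

lemma gen_monoid_insert_absorb:
  "g \<in> gen_monoid X \<Longrightarrow> gen_monoid (insert g X) = gen_monoid X"
  by (intro subset_antisym gen_monoid_least gen_monoid_mono) (auto intro: gen_monoid_base)

lemma Gcd_dvd_gen_monoid: "x \<in> gen_monoid X \<Longrightarrow> Gcd X dvd x"
  by (induction x rule: gen_monoid.induct) auto

lemma Gcd_gen_monoid: "Gcd (gen_monoid X) = Gcd X"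
  by (rule dvd_antisym) (auto intro!: Gcd_greatest intro: Gcd_dvd gen_monoid_base Gcd_dvd_gen_monoid)

lemma Gcd_eq_if_gen_monoid_eq: "gen_monoid X = gen_monoid Y \<Longrightarrow> Gcd X = Gcd Y"
  by (metis Gcd_gen_monoid)

lemma lincomb_set_eq_gen_monoid: "lincomb_set L = gen_monoid (set L)"
proof (induction L)
  case Nil
  then show ?case
    by (auto simp: lincomb_set_def elim: gen_monoid.cases intro: gen_monoid.zero)
next
  case (Cons x L)
  have "lincomb_set (x # L) = {k * x + y | k y. y \<in> lincomb_set L}"
  proof -
    have "(\<Sum>i<length (x # L). a i * (x # L) ! i) = a 0 * x + (\<Sum>i<length L. a (Suc i) * L ! i)"
      for a
      unfolding length_Cons sum.lessThan_Suc_shift by simp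
    moreover have "k * x + (\<Sum>i<length L. b i * L ! i) =
        (\<Sum>i<length (x # L). case_nat k b i * (x # L) ! i)" for k b
      unfolding length_Cons sum.lessThan_Suc_shift by simp
    ultimately show ?thesis
      unfolding lincomb_set_def by (auto; metis)
  qed
  also have "\<dots> = gen_monoid (insert x (set L))"
    using Cons by (auto simp: gen_monoid_insert) (metis add.commute)+
  finally show ?case
    by simp
qed

definition atoms :: "nat set \<Rightarrow> nat set" where
  "atoms S = {x \<in> S. x \<noteq> 0 \<and> (\<forall>a\<in>S. \<forall>b\<in>S. x = a + b \<longrightarrow> a = 0 \<or> b = 0)}"

lemma atoms_subset: "atoms (gen_monoid X) \<subseteq> X"
proof
  fix x assume "x \<in> atoms (gen_monoid X)"
  then have "x \<in> gen_monoid X" "x \<noteq> 0"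
    "\<And>a b. a \<in> gen_monoid X \<Longrightarrow> b \<in> gen_monoid X \<Longrightarrow> x = a + b \<Longrightarrow> a = 0 \<or> b = 0"
    by (auto simp: atoms_def)
  then show "x \<in> X"
  proof (induction x rule: gen_monoid.induct)
    case (add_gen a y)
    have "a = 0 \<or> y = 0"
      using add_gen.prems(2)[of a y] add_gen.hyps gen_monoid_base by auto
    then show ?case
      using add_gen by auto
  qed simp
qed

lemma gen_monoid_atoms: "gen_monoid (atoms (gen_monoid X)) = gen_monoid X"
proof
  show "gen_monoid (atoms (gen_monoid X)) \<subseteq> gen_monoid X"
    by (rule gen_monoid_least) (auto simp: atoms_def)
  show "gen_monoid X \<subseteq> gen_monoid (atoms (gen_monoid X))"
  proof
    fix x assume "x \<in> gen_monoid X"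
    then show "x \<in> gen_monoid (atoms (gen_monoid X))"
    proof (induction x rule: less_induct)
      case (less x)
      show ?case
      proof (cases "x = 0 \<or> x \<in> atoms (gen_monoid X)")
        case True
        then show ?thesis
          by (auto intro: gen_monoid.zero gen_monoid_base)
      next
        case False
        with less.prems obtain a b where
          "a \<in> gen_monoid X" "b \<in> gen_monoid X" "x = a + b" "a \<noteq> 0" "b \<noteq> 0"
          by (auto simp: atoms_def)
        then show ?thesis
          using less.IH[of a] less.IH[of b] gen_monoid_add by auto
      qed
    qed
  qed
qed

(* Encodes c_j g_j \<in> <G_{j-1}> via c_j g_j = lcm d_{j-1} g_j; it holds trivially for Y = {},
   so the first entry of a sequence imposes nothing. *)
definition telescopic_step :: "nat set \<Rightarrow> nat \<Rightarrow> bool" where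
  "telescopic_step Y x \<longleftrightarrow> lcm (Gcd Y) x \<in> gen_monoid Y"

definition telescopic_steps :: "nat list \<Rightarrow> bool" where
  "telescopic_steps L \<longleftrightarrow> (\<forall>j<length L. telescopic_step (set (take j L)) (L ! j))"

lemma dpref_div_mult_eq_lcm:
  assumes "j < length L"
  shows "dpref L j div dpref L (Suc j) * L ! j = lcm (Gcd (set (take j L))) (L ! j)"
proof -
  have "dpref L (Suc j) = gcd (dpref L j) (L ! j)"
    using assms by (simp add: dpref_def take_Suc_conv_app_nth gcd.commute)
  then show ?thesis
    by (simp add: dpref_def lcm_nat_def div_mult_swap mult.commute)
qed

lemma telescopic_iff_telescopic_steps:
  "telescopic L \<longleftrightarrow> L \<noteq> [] \<and> (length L = 1 \<longrightarrow> 0 < L ! 0) \<and>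
     (2 \<le> length L \<longrightarrow> 0 < L ! 0 + L ! 1) \<and> telescopic_steps L"
proof -
  have "(\<forall>j. 2 \<le> j \<and> j \<le> length L \<longrightarrow>
          dpref L (j - 1) div dpref L j * L ! (j - 1) \<in> lincomb_set (take (j - 1) L))
     \<longleftrightarrow> (\<forall>j. 0 < j \<and> j < length L \<longrightarrow> telescopic_step (set (take j L)) (L ! j))"
  proof (intro iffI allI impI)
    fix j
    assume "\<forall>j. 2 \<le> j \<and> j \<le> length L \<longrightarrow>
      dpref L (j - 1) div dpref L j * L ! (j - 1) \<in> lincomb_set (take (j - 1) L)"
      and j: "0 < j \<and> j < length L"
    then have "dpref L j div dpref L (Suc j) * L ! j \<in> lincomb_set (take j L)"
      by (auto dest: spec[of _ "Suc j"])
    then show "telescopic_step (set (take j L)) (L ! j)"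
      using j by (simp add: telescopic_step_def lincomb_set_eq_gen_monoid dpref_div_mult_eq_lcm)
  next
    fix j
    assume "\<forall>j. 0 < j \<and> j < length L \<longrightarrow> telescopic_step (set (take j L)) (L ! j)"
      and j: "2 \<le> j \<and> j \<le> length L"
    moreover obtain i where "j = Suc i"
      using j by (cases j) auto
    ultimately show "dpref L (j - 1) div dpref L j * L ! (j - 1) \<in> lincomb_set (take (j - 1) L)"
      by (auto simp: telescopic_step_def lincomb_set_eq_gen_monoid dpref_div_mult_eq_lcm)
  qed
  moreover have "telescopic_step (set (take 0 L)) (L ! 0)"
    by (simp add: telescopic_step_def gen_monoid.zero)
  ultimately show ?thesis
    unfolding telescopic_def telescopic_steps_def by (metis gr0I)
qed

lemma telescopic_steps_snoc:
  "telescopic_steps (L @ [g]) \<longleftrightarrow> telescopic_steps L \<and> telescopic_step (set L) g"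
  by (auto simp: telescopic_steps_def nth_append less_Suc_eq)

lemma telescopic_step_cong:
  "gen_monoid Y = gen_monoid Z \<Longrightarrow> telescopic_step Y x \<longleftrightarrow> telescopic_step Z x"
  unfolding telescopic_step_def using Gcd_eq_if_gen_monoid_eq by metis

lemma telescopic_step_if_mem: "x \<in> gen_monoid Y \<Longrightarrow> telescopic_step Y x"
  unfolding telescopic_step_def using Gcd_dvd_gen_monoid lcm_proj2_if_dvd_nat by metis

lemma telescopic_step_of_lcm:
  assumes "d dvd Gcd Y" and "telescopic_step Y (lcm d g)"
  shows "telescopic_step Y g"
proof -
  have "lcm (Gcd Y) (lcm d g) = lcm (Gcd Y) g"
    using assms(1) by (metis lcm.assoc lcm_proj1_if_dvd_nat)
  then show ?thesis
    using assms(2) by (simp add: telescopic_step_def)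
qed

lemma telescopic_step_replace_lcm:
  assumes "d dvd Gcd Z" and "d dvd a" and "telescopic_step (insert (lcm d g) Z) a"
  shows "telescopic_step (insert g Z) a"
proof -
  have "lcm (Gcd (insert (lcm d g) Z)) a = lcm (gcd (Gcd Z) (lcm d g)) a"
    by (simp only: Gcd_insert gcd.commute)
  also have "\<dots> = lcm (lcm d (gcd (Gcd Z) g)) a"
    by (simp only: gcd_lcm_distrib gcd_nat.absorb2[OF assms(1)])
  also have "\<dots> = lcm (gcd (Gcd Z) g) (lcm d a)"
    by (metis lcm.assoc lcm.commute)
  also have "\<dots> = lcm (Gcd (insert g Z)) a"
    by (simp only: lcm_proj2_if_dvd_nat[OF assms(2)] Gcd_insert gcd.commute)
  finally have "lcm (Gcd (insert g Z)) a \<in> gen_monoid (insert (lcm d g) Z)"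
    using assms(3) unfolding telescopic_step_def by simp
  moreover have "lcm d g \<in> gen_monoid (insert g Z)"
    using gen_monoid_mult[of g _ "lcm d g div g"] by (simp add: gen_monoid_base)
  then have "gen_monoid (insert (lcm d g) Z) \<subseteq> gen_monoid (insert g Z)"
    by (intro gen_monoid_least) (auto intro: gen_monoid_base)
  ultimately show ?thesis
    unfolding telescopic_step_def by blast
qed

lemma atom_insert_new:
  assumes "g \<notin> gen_monoid X"
  shows "g \<in> atoms (gen_monoid (insert g X))"
proof -
  have "g \<noteq> 0"
    using assms by (metis gen_monoid.zero)
  have "a = 0 \<or> b = 0"
    if ab: "a \<in> gen_monoid (insert g X)" "b \<in> gen_monoid (insert g X)" "g = a + b" for a b
  proof -
    obtain a' m where a: "a' \<in> gen_monoid X" "a = a' + m * g"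
      using ab(1) gen_monoid_insert by blast
    obtain b' n where b: "b' \<in> gen_monoid X" "b = b' + n * g"
      using ab(2) gen_monoid_insert by blast
    have "a + b = (a' + b') + (m + n) * g"
      using a(2) b(2) by (simp add: algebra_simps)
    with ab(3) have g: "g = (a' + b') + (m + n) * g"
      by linarith
    show ?thesis
    proof (cases "m + n = 0")
      case True
      then show ?thesis
        using g assms gen_monoid_add[OF a(1) b(1)] by simp
    next
      case False
      then have "g \<le> (m + n) * g"
        by (cases "m + n") auto
      then have "a' + b' = 0" "(m + n) * g = g"
        using g by linarith+
      then have "m + n = 1"
        using \<open>g \<noteq> 0\<close> by simp
      then show ?thesis
        using a(2) b(2) \<open>a' + b' = 0\<close> by (cases m) auto
    qed
  qed
  then show ?thesis
    using \<open>g \<noteq> 0\<close> by (auto simp: atoms_def intro: gen_monoid_base)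
qed

lemma atom_insert_old:
  assumes lcm_mem: "lcm (Gcd X) g \<in> gen_monoid X"
    and x: "x \<in> atoms (gen_monoid X)" and "x \<noteq> lcm (Gcd X) g"
  shows "x \<in> atoms (gen_monoid (insert g X))"
proof -
  define l where "l = lcm (Gcd X) g"
  have xX: "x \<in> gen_monoid X" "x \<noteq> 0"
    and irred: "\<And>a b. a \<in> gen_monoid X \<Longrightarrow> b \<in> gen_monoid X \<Longrightarrow> x = a + b \<Longrightarrow> a = 0 \<or> b = 0"
    using x by (auto simp: atoms_def)
  have "a = 0 \<or> b = 0"
    if ab: "a \<in> gen_monoid (insert g X)" "b \<in> gen_monoid (insert g X)" "x = a + b" for a b
  proof -
    obtain a' m where a: "a' \<in> gen_monoid X" "a = a' + m * g"
      using ab(1) gen_monoid_insert by blast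
    obtain b' n where b: "b' \<in> gen_monoid X" "b = b' + n * g"
      using ab(2) gen_monoid_insert by blast
    have ab': "a' + b' \<in> gen_monoid X"
      using a(1) b(1) by (rule gen_monoid_add)
    have x_eq: "x = (a' + b') + (m + n) * g"
      using a(2) b(2) ab(3) by (simp add: algebra_simps)
    show ?thesis
    proof (cases "(m + n) * g = 0")
      case True
      then have "a = a'" "b = b'"
        using a(2) b(2) by auto
      then show ?thesis
        using irred[of a b] a(1) b(1) ab(3) by simp
    next
      case False
      have "Gcd X dvd (a' + b') + (m + n) * g"
        using x_eq xX(1) Gcd_dvd_gen_monoid by simp
      then have "Gcd X dvd (m + n) * g"
        using Gcd_dvd_gen_monoid[OF ab'] by (simp add: dvd_add_right_iff)
      then have "l dvd (m + n) * g"
        unfolding l_def by (simp add: lcm_least)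
      then obtain q where q: "(m + n) * g = l * q"
        by blast
      with False obtain q' where "q = Suc q'"
        by (cases q) auto
      then have "x = l + ((a' + b') + q' * l)"
        using x_eq q by (simp add: algebra_simps)
      moreover have "(a' + b') + q' * l \<in> gen_monoid X"
        using ab' lcm_mem gen_monoid_add gen_monoid_mult unfolding l_def by blast
      moreover have "l \<noteq> 0"
        using False q by auto
      ultimately show ?thesis
        using irred[of l] lcm_mem assms(3) unfolding l_def by auto
    qed
  qed
  then show ?thesis
    using xX gen_monoid_mono[of X "insert g X"] by (auto simp: atoms_def)
qed

lemma lcm_not_atom_insert:
  assumes "lcm (Gcd X) g \<in> gen_monoid X" and "g \<notin> gen_monoid X"
  shows "lcm (Gcd X) g \<notin> atoms (gen_monoid (insert g X))"
proof
  define l where "l = lcm (Gcd X) g"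
  assume "l \<in> atoms (gen_monoid (insert g X))"
  then have "l \<noteq> 0" and irred: "\<And>a b. a \<in> gen_monoid (insert g X) \<Longrightarrow>
      b \<in> gen_monoid (insert g X) \<Longrightarrow> l = a + b \<Longrightarrow> a = 0 \<or> b = 0"
    unfolding atoms_def by blast+
  obtain k where k: "l = k * g"
    unfolding l_def by (metis dvd_lcm2 dvdE mult.commute)
  have "l \<noteq> g"
    using assms unfolding l_def by metis
  with k \<open>l \<noteq> 0\<close> obtain k' where "k = Suc (Suc k')"
    by (metis mult_0 mult_1 not0_implies_Suc One_nat_def)
  then have "l = g + Suc k' * g" "g \<noteq> 0" "Suc k' * g \<noteq> 0"
    using k \<open>l \<noteq> 0\<close> by auto
  moreover have g: "g \<in> gen_monoid (insert g X)"
    by (simp add: gen_monoid_base)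
  ultimately show False
    using irred[OF g gen_monoid_mult[OF g, of "Suc k'"]] by simp
qed

lemma atoms_gen_monoid_insert:
  assumes "lcm (Gcd X) g \<in> gen_monoid X" and "g \<notin> gen_monoid X"
  shows "atoms (gen_monoid (insert g X)) = insert g (atoms (gen_monoid X) - {lcm (Gcd X) g})"
proof
  have "gen_monoid (insert g (atoms (gen_monoid X))) = gen_monoid (insert g X)"
    by (rule gen_monoid_insert_cong) (rule gen_monoid_atoms)
  then have "atoms (gen_monoid (insert g X)) \<subseteq> insert g (atoms (gen_monoid X))"
    using atoms_subset[of "insert g (atoms (gen_monoid X))"] by simp
  then show "atoms (gen_monoid (insert g X)) \<subseteq> insert g (atoms (gen_monoid X) - {lcm (Gcd X) g})"
    using lcm_not_atom_insert[OF assms] by blast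
  show "insert g (atoms (gen_monoid X) - {lcm (Gcd X) g}) \<subseteq> atoms (gen_monoid (insert g X))"
    using atom_insert_new[OF assms(2)] atom_insert_old[OF assms(1)] by blast
qed

lemma telescopic_steps_replace_lcm:
  assumes chain: "telescopic_steps A" and "distinct A" and i: "i < length A"
    and Ai: "A ! i = lcm (Gcd (set A)) g"
  shows "telescopic_steps (A[i := g])"
  unfolding telescopic_steps_def
proof (intro allI impI)
  define d where "d = Gcd (set A)"
  have d_dvd: "d dvd y" if "y \<in> set (take j A)" for j y
    using that unfolding d_def by (auto dest: in_set_takeD)
  fix j assume j: "j < length (A[i := g])"
  have cond: "telescopic_step (set (take j A)) (A ! j)"
    using chain j unfolding telescopic_steps_def by simp
  consider "j < i" | "j = i" | "i < j"
    by linarith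
  then show "telescopic_step (set (take j (A[i := g]))) (A[i := g] ! j)"
  proof cases
    case 1
    then show ?thesis
      using cond by simp
  next
    case 2
    have "d dvd Gcd (set (take i A))"
      using d_dvd by (simp add: Gcd_greatest)
    then show ?thesis
      using cond 2 i Ai telescopic_step_of_lcm unfolding d_def by simp
  next
    case 3
    define Z where "Z = set (take j A) - {lcm d g}"
    have "distinct (take j A)" "i < length (take j A)" "take j A ! i = lcm d g"
      using \<open>distinct A\<close> 3 j Ai by (simp_all add: d_def)
    then have "set (take j A) = insert (lcm d g) Z"
      and "set (take j (A[i := g])) = insert g Z"
      unfolding Z_def take_update_swap by (force simp: in_set_conv_nth, simp add: set_update_distinct)
    moreover have "d dvd Gcd Z" "d dvd A ! j"
      using d_dvd[of _ "Suc j"] j by (auto simp: Z_def take_Suc_conv_app_nth intro!: Gcd_greatest)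
    ultimately show ?thesis
      using cond 3 telescopic_step_replace_lcm by simp
  qed
qed

lemma telescopic_steps_insert_atom:
  assumes chain: "telescopic_steps A" and dist: "distinct A"
    and atoms: "set A = atoms (gen_monoid (set A))" and cond: "telescopic_step (set A) g"
  obtains B where "telescopic_steps B" "distinct B"
    "set B = atoms (gen_monoid (insert g (set A)))"
proof (cases "g \<in> gen_monoid (set A)")
  case True
  then show ?thesis
    using that chain dist atoms gen_monoid_insert_absorb by metis
next
  case False
  define l where "l = lcm (Gcd (set A)) g"
  have "l \<in> gen_monoid (set A)"
    using cond unfolding telescopic_step_def l_def .
  then have atoms_eq: "atoms (gen_monoid (insert g (set A))) = insert g (set A - {l})"
    using atoms_gen_monoid_insert[OF _ False] atoms unfolding l_def by simp
  have "g \<notin> set A"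
    using False gen_monoid_base by blast
  show ?thesis
  proof (cases "l \<in> set A")
    case False
    then show ?thesis
      using that[of "A @ [g]"] chain cond dist \<open>g \<notin> set A\<close> atoms_eq
      by (auto simp: telescopic_steps_snoc)
  next
    case True
    then obtain i where i: "i < length A" "A ! i = l"
      by (auto simp: in_set_conv_nth)
    show ?thesis
    proof (rule that)
      show "telescopic_steps (A[i := g])"
        using telescopic_steps_replace_lcm[OF chain dist] i unfolding l_def by simp
      show "distinct (A[i := g])"
        using dist \<open>g \<notin> set A\<close> by (simp add: distinct_list_update)
      show "set (A[i := g]) = atoms (gen_monoid (insert g (set A)))"
        using set_update_distinct[OF dist i(1)] i(2) atoms_eq by simp
    qed
  qed
qed

lemma telescopic_steps_atoms:
  assumes "telescopic_steps P"
  obtains A where "telescopic_steps A" "distinct A" "set A = atoms (gen_monoid (set P))"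
  using assms
proof (induction P arbitrary: thesis rule: rev_induct)
  case Nil
  have "atoms (gen_monoid {}) = {}"
    using atoms_subset[of "{}"] by simp
  then show ?case
    using Nil.prems(1)[of "[]"] by (simp add: telescopic_steps_def)
next
  case (snoc g P)
  then have "telescopic_steps P" "telescopic_step (set P) g"
    by (simp_all add: telescopic_steps_snoc)
  then obtain A where A: "telescopic_steps A" "distinct A" "set A = atoms (gen_monoid (set P))"
    using snoc.IH by blast
  then have gen_A: "gen_monoid (set A) = gen_monoid (set P)"
    by (simp add: gen_monoid_atoms)
  have "telescopic_step (set A) g"
    using \<open>telescopic_step (set P) g\<close> telescopic_step_cong[OF gen_A] by simp
  moreover have "set A = atoms (gen_monoid (set A))"
    using A(3) gen_A by simp
  ultimately obtain B where "telescopic_steps B" "distinct B"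
    "set B = atoms (gen_monoid (insert g (set A)))"
    using telescopic_steps_insert_atom[OF A(1,2)] by metis
  then show ?case
    using snoc.prems(1) gen_monoid_insert_cong[OF gen_A, of g] by simp
qed

lemma telescopicI: "telescopic_steps L \<Longrightarrow> L \<noteq> [] \<Longrightarrow> hd L \<noteq> 0 \<Longrightarrow> telescopic L"
  by (cases L) (auto simp: telescopic_iff_telescopic_steps)

lemma telescopic_steps_append_generated:
  "telescopic_steps A \<Longrightarrow> set R \<subseteq> gen_monoid (set A) \<Longrightarrow> telescopic_steps (A @ R)"
proof (induction R rule: rev_induct)
  case (snoc x R)
  have "gen_monoid (set (A @ R)) = gen_monoid (set A)"
    using snoc.prems(2) by (intro subset_antisym gen_monoid_least gen_monoid_mono)
      (auto intro: gen_monoid_base)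
  moreover have "telescopic_step (set A) x"
    using snoc.prems(2) by (simp add: telescopic_step_if_mem)
  ultimately have "telescopic_step (set (A @ R)) x"
    using telescopic_step_cong by blast
  moreover have "telescopic_steps (A @ R)"
    using snoc by simp
  ultimately show ?case
    unfolding append_assoc[symmetric] telescopic_steps_snoc by blast
qed simp

lemma telescopic_nonzero:
  assumes "telescopic L"
  obtains x where "x \<in> set L" "x \<noteq> 0"
proof (cases L)
  case (Cons y ys)
  then have "y \<noteq> 0 \<or> (ys \<noteq> [] \<and> hd ys \<noteq> 0)"
    using assms by (cases ys) (auto simp: telescopic_iff_telescopic_steps)
  then show ?thesis
    using that Cons by (auto dest: hd_in_set)
qed (use assms in \<open>simp add: telescopic_iff_telescopic_steps\<close>)

lemma mset_le_if_distinct_subset: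
  assumes "distinct xs" and "set xs \<subseteq> set ys"
  shows "mset xs \<subseteq># mset ys"
proof -
  have "mset xs = mset_set (set xs)"
    using assms(1) by (simp add: mset_set_set)
  also have "\<dots> \<subseteq># mset_set (set ys)"
    using assms(2) by (simp add: subset_imp_msubset_mset_set)
  also have "\<dots> \<subseteq># mset ys"
    using mset_set_set_mset_msubset[of "mset ys"] by simp
  finally show ?thesis .
qed

lemma telescopic_rearrangement:
  assumes tel: "telescopic L" and gen: "gen_monoid (set L) = gen_monoid (set H)"
  shows "\<exists>L'. mset L' = mset H \<and> telescopic L'"
proof -
  have "telescopic_steps L"
    using tel by (simp add: telescopic_iff_telescopic_steps)
  then obtain A where A: "telescopic_steps A" "distinct A" "set A = atoms (gen_monoid (set L))"
    by (rule telescopic_steps_atoms)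
  then have gen_A: "gen_monoid (set A) = gen_monoid (set H)"
    using gen by (simp add: gen_monoid_atoms)
  have "A \<noteq> []"
  proof
    assume "A = []"
    obtain x where "x \<in> set L" "x \<noteq> 0"
      using tel by (rule telescopic_nonzero)
    then have "x \<in> gen_monoid (set A)"
      using gen gen_A gen_monoid_base[of x "set L"] by simp
    then have "Gcd {} dvd x"
      using \<open>A = []\<close> Gcd_dvd_gen_monoid[of x "{}"] by simp
    with \<open>x \<noteq> 0\<close> show False
      by simp
  qed
  have "hd A \<noteq> 0"
    using \<open>A \<noteq> []\<close> A(3) hd_in_set[of A] by (auto simp: atoms_def)
  have "set A \<subseteq> set H"
    using A(3) gen atoms_subset by simp
  obtain R where R: "mset (A @ R) = mset H"
  proof -
    have "mset A \<subseteq># mset H"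
      using A(2) \<open>set A \<subseteq> set H\<close> by (rule mset_le_if_distinct_subset)
    moreover obtain R where "mset R = mset H - mset A"
      using ex_mset by blast
    ultimately show ?thesis
      using that[of R] by (simp add: subset_mset.add_diff_inverse)
  qed
  have "set R \<subseteq> gen_monoid (set A)"
    using mset_eq_setD[OF R] gen_A gen_monoid_base[of _ "set H"] by auto
  with A(1) have "telescopic_steps (A @ R)"
    by (rule telescopic_steps_append_generated)
  then have "telescopic (A @ R)"
    using \<open>A \<noteq> []\<close> \<open>hd A \<noteq> 0\<close> by (intro telescopicI) simp_all
  with R show ?thesis
    by blast
qed

lemma ex_permute_seq_iff:
  "(\<exists>\<sigma>. \<sigma> permutes {..<length G} \<and> P (permute_seq \<sigma> G)) \<longleftrightarrow>
   (\<exists>L. mset L = mset G \<and> P L)"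
proof
  assume "\<exists>\<sigma>. \<sigma> permutes {..<length G} \<and> P (permute_seq \<sigma> G)"
  then show "\<exists>L. mset L = mset G \<and> P L"
    unfolding permute_seq_def permute_list_def[symmetric] by (blast dest: mset_permute_list)
next
  assume "\<exists>L. mset L = mset G \<and> P L"
  then obtain L \<sigma> where "P L" "\<sigma> permutes {..<length G}" "permute_list \<sigma> G = L"
    using mset_eq_permutation by metis
  then show "\<exists>\<sigma>. \<sigma> permutes {..<length G} \<and> P (permute_seq \<sigma> G)"
    by (auto simp: permute_seq_def permute_list_def)
qed

theorem mainTheorem3:
  fixes G H :: "nat list"
  assumes "\<exists>x\<in>set G. x \<noteq> 0"
    and "\<exists>x\<in>set H. x \<noteq> 0"
    and "lincomb_set G = lincomb_set H"
  shows "(\<exists>\<sigma>. \<sigma> permutes {..<length G} \<and> telescopic (permute_seq \<sigma> G)) \<longleftrightarrow>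
         (\<exists>\<tau>. \<tau> permutes {..<length H} \<and> telescopic (permute_seq \<tau> H))"
proof -
  have gen: "gen_monoid (set G) = gen_monoid (set H)"
    using assms(3) by (simp add: lincomb_set_eq_gen_monoid)
  have rearrange: "\<exists>L'. mset L' = mset K' \<and> telescopic L'"
    if "mset L = mset K" "telescopic L" "gen_monoid (set K) = gen_monoid (set K')" for L K K'
    using telescopic_rearrangement[OF that(2)] that(3) mset_eq_setD[OF that(1)] by simp
  show ?thesis
    unfolding ex_permute_seq_iff
    using rearrange[OF _ _ gen] rearrange[OF _ _ gen[symmetric]] by blast
qed

end
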